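(* Let $W$ be a kernel walk and $T(W)$ its induced tree, viewed as a rooted plane tree (rooted at the first vertex of $W$, with the children of each vertex ordered according to the order in which the walk first traverses the corresponding edges). Then (a) every leaf of $T(W)$ is incident to an excess edge, and (b) every inner vertex of $T(W)$ has outdegree at least two or is incident to an excess edge. Conversely, every rooted plane tree whose edges are colored 'simple' or 'excess' and which satisfies (a) and (b) appears (with its plane structure and edge coloring) as the induced tree of some kernel walk.
   Context: A tree walk of size $m$ and length $L$ is a sequence $W=(v_1,\dots,v_L)$ of elements of $[m]$ in which every element of $[m]$ occurs, such that the graph $T(W)$ with vertex set $[m]$ and edges $\{v_j,v_{j+1}\}$ ($1\le j<L$) and $\{v_L,v_1\}$ is a tree (the induced tree); $W$ is regarded as the closed walk $v_1\to\dots\to v_L\to v_1$, and $v_1$ is the root. If the root has degree $1$ it is also considered a leaf. The outdegree of a vertex is its number of children. An edge of $T(W)$ is simple if the closed walk traverses it exactly twice, and an excess edge otherwise (it is then traversed $2k\ge4$ times). A kernel walk is a tree walk $W$ such that: (i) no leaf of $T(W)$ other than the root is incident to a simple edge; (ii) if the root is a leaf, its incident edge is an excess edge; (iii) no non-root vertex of $T(W)$ has degree exactly $2$ with both of its incident edges simple. *)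

theory Defs
  imports Main
begin

text \<open>A walk is a nonempty list W = [v_1,...,v_L] of naturals, read as the closed
walk v_1 -> ... -> v_L -> v_1. Step j (for j < L) traverses the edge
{W!j, W!((j+1) mod L)}.\<close>

definition wstep :: "nat list \<Rightarrow> nat \<Rightarrow> nat set" where
  "wstep W j = {W ! j, W ! (Suc j mod length W)}"

definition walk_edges :: "nat list \<Rightarrow> nat set set" where
  "walk_edges W = {wstep W j | j. j < length W}"

definition trav_count :: "nat list \<Rightarrow> nat set \<Rightarrow> nat" where
  "trav_count W e = card {j. j < length W \<and> wstep W j = e}"

definition simple_edge :: "nat list \<Rightarrow> nat set \<Rightarrow> bool" where
  "simple_edge W e \<longleftrightarrow> e \<in> walk_edges W \<and> trav_count W e = 2"

definition excess_edge :: "nat list \<Rightarrow> nat set \<Rightarrow> bool" where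
  "excess_edge W e \<longleftrightarrow> e \<in> walk_edges W \<and> trav_count W e \<noteq> 2"

definition first_trav :: "nat list \<Rightarrow> nat set \<Rightarrow> nat" where
  "first_trav W e = (LEAST j. j < length W \<and> wstep W j = e)"

definition is_tree :: "'a set \<Rightarrow> 'a set set \<Rightarrow> bool" where
  "is_tree V E \<longleftrightarrow>
     finite V \<and> V \<noteq> {} \<and>
     (\<forall>e\<in>E. \<exists>u v. e = {u, v} \<and> u \<noteq> v \<and> u \<in> V \<and> v \<in> V) \<and>
     (\<forall>u\<in>V. \<forall>v\<in>V. (u, v) \<in> {(x, y). {x, y} \<in> E}\<^sup>*) \<and>
     \<not> (\<exists>cs. 3 \<le> length cs \<and> distinct cs \<and>
            (\<forall>i < length cs. {cs ! i, cs ! (Suc i mod length cs)} \<in> E))"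

definition tdeg :: "'a set set \<Rightarrow> 'a \<Rightarrow> nat" where
  "tdeg E v = card {e \<in> E. v \<in> e}"

definition tree_walk :: "nat \<Rightarrow> nat list \<Rightarrow> bool" where
  "tree_walk m W \<longleftrightarrow> W \<noteq> [] \<and> set W = {1..m} \<and> is_tree {1..m} (walk_edges W)"

text \<open>The root is hd W; a leaf is a vertex of degree 1 (this includes the root
when it has degree 1).\<close>
definition wleaf :: "nat list \<Rightarrow> nat \<Rightarrow> bool" where
  "wleaf W v \<longleftrightarrow> v \<in> set W \<and> tdeg (walk_edges W) v = 1"

definition kernel_walk :: "nat \<Rightarrow> nat list \<Rightarrow> bool" where
  "kernel_walk m W \<longleftrightarrow> tree_walk m W \<and>
     (\<forall>v\<in>set W. v \<noteq> hd W \<and> wleaf W v \<longrightarrow>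
        \<not> (\<exists>e\<in>walk_edges W. v \<in> e \<and> simple_edge W e)) \<and>
     (wleaf W (hd W) \<longrightarrow> (\<forall>e\<in>walk_edges W. hd W \<in> e \<longrightarrow> excess_edge W e)) \<and>
     (\<forall>v\<in>set W. v \<noteq> hd W \<and> tdeg (walk_edges W) v = 2 \<longrightarrow>
        \<not> (\<forall>e\<in>walk_edges W. v \<in> e \<longrightarrow> simple_edge W e))"

definition woutdeg :: "nat list \<Rightarrow> nat \<Rightarrow> nat" where
  "woutdeg W v = (if v = hd W then tdeg (walk_edges W) v else tdeg (walk_edges W) v - 1)"

text \<open>A (vertex-labelled) rooted plane tree: a node has a label and an ordered list
of children; each child comes with the colour of the edge to it
(True = excess, False = simple).\<close>

datatype 'a ltree = LNode (lab: 'a) (kids: "(bool \<times> 'a ltree) list")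

type_synonym ptree = "unit ltree"

definition erase :: "'a ltree \<Rightarrow> ptree" where
  "erase t = map_ltree (\<lambda>_. ()) t"

fun labels :: "'a ltree \<Rightarrow> 'a list" where
  "labels (LNode a cs) = a # concat (map (\<lambda>p. labels (snd p)) cs)"

inductive_set subtrees :: "'a ltree \<Rightarrow> 'a ltree set" for t where
  self: "t \<in> subtrees t"
| kid: "s \<in> subtrees t \<Longrightarrow> p \<in> set (kids s) \<Longrightarrow> snd p \<in> subtrees t"

definition ledges :: "'a ltree \<Rightarrow> ('a \<times> bool \<times> 'a) set" where
  "ledges t = {(lab s, fst p, lab (snd p)) | s p. s \<in> subtrees t \<and> p \<in> set (kids s)}"

text \<open>Conditions (a) and (b) on a coloured rooted plane tree.
 sub_ok c t: t is a non-root subtree whose edge to its parent has colour c.\<close>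
fun sub_ok :: "bool \<Rightarrow> 'a ltree \<Rightarrow> bool" where
  "sub_ok c (LNode a cs) =
     ((if cs = [] then c
       else 2 \<le> length cs \<or> c \<or> (\<exists>p\<in>set cs. fst p))
      \<and> (\<forall>p\<in>set cs. sub_ok (fst p) (snd p)))"

fun ptree_ok :: "'a ltree \<Rightarrow> bool" where
  "ptree_ok (LNode a cs) =
     ((if length cs = 1 then fst (hd cs)
       else 2 \<le> length cs \<or> (\<exists>p\<in>set cs. fst p))
      \<and> (\<forall>p\<in>set cs. sub_ok (fst p) (snd p)))"

text \<open>The walk W realizes the labelled plane tree lt: lt is T(W) rooted at the first
vertex, with edge colours given by simple/excess and children ordered by first
traversal.\<close>
definition realizes :: "nat list \<Rightarrow> nat ltree \<Rightarrow> bool" where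
  "realizes W lt \<longleftrightarrow>
     lab lt = hd W \<and> distinct (labels lt) \<and> set (labels lt) = set W \<and>
     {{x, y} | x b y. (x, b, y) \<in> ledges lt} = walk_edges W \<and>
     (\<forall>(x, b, y) \<in> ledges lt. b \<longleftrightarrow> excess_edge W {x, y}) \<and>
     (\<forall>s\<in>subtrees lt.
        sorted_wrt (<) (map (\<lambda>p. first_trav W {lab s, lab (snd p)}) (kids s)))"

end

theory Submission
  imports Defs
begin

text \<open>
  Conditions (a) and (b) are read off the kernel conditions: the unique edge at a leaf is excess,
  and a non-root vertex has outdegree one less than its degree, where degree two with two simple
  edges is excluded.

  Conversely, number the vertices of a coloured plane tree in preorder and go around it depth
  first, walking every simple edge down and up once and every excess edge twice. This closed walk
  induces the tree with its colouring (edges are traversed two resp. four times) and its plane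
  order (the edge to a child is first traversed when the tour enters that child). The degree of
  a vertex is its number of children plus one for a non-root vertex, so (a) and (b) for the tree
  give back the kernel conditions. Preorder labels increase along every edge; hence the largest
  vertex of a cycle would have two smaller neighbours, i.e. two parents, so the induced graph is a
  tree.
\<close>

section \<open>Kernel walks\<close>

lemma walk_vertex_has_edge: "v \<in> set W \<Longrightarrow> \<exists>e\<in>walk_edges W. v \<in> e"
  unfolding walk_edges_def wstep_def by (auto simp: in_set_conv_nth)

lemma kernel_walk_leaf_excess:
  assumes "kernel_walk m W" "v \<in> set W" "wleaf W v"
  shows "\<exists>e\<in>walk_edges W. v \<in> e \<and> excess_edge W e"
proof -
  obtain e where e: "e \<in> walk_edges W" "v \<in> e" using walk_vertex_has_edge[OF assms(2)] by blast
  have "excess_edge W e"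
  proof (cases "v = hd W")
    case True
    then show ?thesis using assms(1,3) e unfolding kernel_walk_def by auto
  next
    case False
    then have "\<not> simple_edge W e" using assms e unfolding kernel_walk_def by blast
    then show ?thesis using e(1) by (simp add: simple_edge_def excess_edge_def)
  qed
  then show ?thesis using e by blast
qed

lemma kernel_walk_inner_vertex:
  assumes "kernel_walk m W" "v \<in> set W" "\<not> wleaf W v"
  shows "2 \<le> woutdeg W v \<or> (\<exists>e\<in>walk_edges W. v \<in> e \<and> excess_edge W e)"
proof -
  have "finite (walk_edges W)" unfolding walk_edges_def by simp
  moreover have "{e \<in> walk_edges W. v \<in> e} \<noteq> {}" using walk_vertex_has_edge[OF assms(2)] by blast
  ultimately have "tdeg (walk_edges W) v \<noteq> 0" unfolding tdeg_def by simp
  then have deg: "2 \<le> tdeg (walk_edges W) v" using assms(2,3) unfolding wleaf_def by simp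
  show ?thesis
  proof (cases "v \<noteq> hd W \<and> tdeg (walk_edges W) v = 2")
    case True
    then obtain e where "e \<in> walk_edges W" "v \<in> e" "\<not> simple_edge W e"
      using assms(1,2) unfolding kernel_walk_def by blast
    then show ?thesis by (auto simp: simple_edge_def excess_edge_def)
  next
    case False
    then show ?thesis using deg by (auto simp: woutdeg_def)
  qed
qed

section \<open>Labelled plane trees\<close>

lemma ltree_induct [case_names LNode]:
  assumes "\<And>a cs. (\<And>p. p \<in> set cs \<Longrightarrow> P (snd p)) \<Longrightarrow> P (LNode a cs)"
  shows "P t"
proof (induction t rule: ltree.induct)
  case (LNode a cs)
  show ?case
    by (rule assms) (metis LNode prod.collapse snds.intros)
qed

lemma lab_in_labels [simp]: "lab t \<in> set (labels t)"
  by (cases t) simp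

lemma subtrees_LNode:
  "subtrees (LNode a cs) = insert (LNode a cs) (\<Union>p\<in>set cs. subtrees (snd p))"
proof (intro equalityI subsetI)
  fix s assume "s \<in> subtrees (LNode a cs)"
  then show "s \<in> insert (LNode a cs) (\<Union>p\<in>set cs. subtrees (snd p))"
    by induction (auto intro: subtrees.intros)
next
  have "s \<in> subtrees (LNode a cs)" if "s \<in> subtrees (snd q)" "q \<in> set cs" for s q
    using that
  proof induction
    case self
    then show ?case by (metis ltree.sel(2) subtrees.kid subtrees.self)
  next
    case (kid s p)
    then show ?case by (blast intro: subtrees.kid)
  qed
  then show "s \<in> subtrees (LNode a cs)"
    if "s \<in> insert (LNode a cs) (\<Union>p\<in>set cs. subtrees (snd p))" for s
    using that by (auto intro: subtrees.self)
qed

lemma ledges_LNode [simp]: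
  "ledges (LNode a cs) = (\<Union>p\<in>set cs. insert (a, fst p, lab (snd p)) (ledges (snd p)))"
proof -
  have "ledges (LNode a cs) =
      {(lab s, fst p, lab (snd p)) | s p. s = LNode a cs \<and> p \<in> set (kids s)} \<union>
      (\<Union>q\<in>set cs. ledges (snd q))"
    unfolding ledges_def subtrees_LNode by blast
  then show ?thesis by auto
qed

lemma finite_ledges [simp]: "finite (ledges t)"
  by (induction t rule: ltree_induct) auto

lemma set_labels_eq_lab_subtrees: "set (labels t) = lab ` subtrees t"
  by (induction t rule: ltree_induct) (auto simp: subtrees_LNode)

lemma distinct_labels_kid:
  assumes "distinct (labels (LNode a cs))" "p \<in> set cs"
  shows "distinct (labels (snd p)) \<and> a \<notin> set (labels (snd p))"
proof -
  obtain xs ys where "cs = xs @ p # ys" using assms(2) by (meson split_list)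
  then show ?thesis using assms(1) by auto
qed

lemma kids_eq_if_labels_meet:
  assumes "distinct (labels (LNode a cs))" "p \<in> set cs" "q \<in> set cs"
    "v \<in> set (labels (snd p))" "v \<in> set (labels (snd q))"
  shows "p = q"
proof -
  have "distinct (concat (map (\<lambda>p. labels (snd p)) cs))" using assms(1) by simp
  then show ?thesis using assms(2-) by (induction cs) auto
qed

lemma distinct_labels_subtree:
  "s \<in> subtrees t \<Longrightarrow> distinct (labels t) \<Longrightarrow> distinct (labels s)"
  by (induction rule: subtrees.induct) (metis distinct_labels_kid ltree.collapse)+

lemma inj_on_lab_subtrees: "distinct (labels t) \<Longrightarrow> inj_on lab (subtrees t)"
proof (induction t rule: ltree_induct)
  case (LNode a cs)
  show ?case
  proof (rule inj_onI)
    fix s s' assume s: "s \<in> subtrees (LNode a cs)" and s': "s' \<in> subtrees (LNode a cs)"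
      and eq: "lab s = lab s'"
    have below: "lab r \<in> set (labels (snd p))" if "r \<in> subtrees (snd p)" for r p
      using that by (simp add: set_labels_eq_lab_subtrees)
    have root: "r = LNode a cs" if r: "r \<in> subtrees (LNode a cs)" "lab r = a" for r
    proof (rule ccontr)
      assume "r \<noteq> LNode a cs"
      then obtain p where "p \<in> set cs" "r \<in> subtrees (snd p)"
        using r(1) unfolding subtrees_LNode by blast
      then show False using below distinct_labels_kid[OF LNode.prems] r(2) by blast
    qed
    show "s = s'"
    proof (cases "s = LNode a cs \<or> s' = LNode a cs")
      case True
      then have "lab s = a" "lab s' = a" using eq by auto
      then have "s = LNode a cs" "s' = LNode a cs" using root s s' by blast+
      then show ?thesis by simp
    next
      case False
      then obtain p p' where p: "p \<in> set cs" "s \<in> subtrees (snd p)"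
        and p': "p' \<in> set cs" "s' \<in> subtrees (snd p')"
        using s s' by (auto simp: subtrees_LNode)
      have "p = p'"
        using kids_eq_if_labels_meet[OF LNode.prems p(1) p'(1) below[OF p(2)]] below[OF p'(2)] eq
        by simp
      moreover have "inj_on lab (subtrees (snd p))"
        using LNode.IH[OF p(1)] distinct_labels_kid[OF LNode.prems p(1)] by blast
      ultimately show ?thesis using p(2) p'(2) eq by (auto dest: inj_onD)
    qed
  qed
qed

lemma subtree_is_kid:
  assumes "s \<in> subtrees t" "s \<noteq> t"
  obtains s' p where "s' \<in> subtrees t" "p \<in> set (kids s')" "s = snd p"
  using assms by (cases rule: subtrees.cases) auto

lemma ledges_labels: "(x, b, y) \<in> ledges t \<Longrightarrow> x \<in> set (labels t) \<and> y \<in> set (labels t)"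
  by (induction t rule: ltree_induct) fastforce

lemma ledges_not_into_root: "distinct (labels t) \<Longrightarrow> (x, b, y) \<in> ledges t \<Longrightarrow> y \<noteq> lab t"
proof (induction t rule: ltree_induct)
  case (LNode a cs)
  then obtain p where p: "p \<in> set cs" "(x, b, y) = (a, fst p, lab (snd p)) \<or> (x, b, y) \<in> ledges (snd p)"
    by auto
  have "y \<in> set (labels (snd p))" using p ledges_labels[of x b y "snd p"] by auto
  then show ?case using distinct_labels_kid[OF LNode.prems(1) p(1)] by auto
qed

lemma ledges_parent_unique:
  "distinct (labels t) \<Longrightarrow> (x, b, y) \<in> ledges t \<Longrightarrow> (x', b', y) \<in> ledges t \<Longrightarrow> x = x' \<and> b = b'"
proof (induction t rule: ltree_induct)
  case (LNode a cs)
  from LNode.prems(2) obtain p where p: "p \<in> set cs"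
    "(x, b, y) = (a, fst p, lab (snd p)) \<or> (x, b, y) \<in> ledges (snd p)"
    by auto
  from LNode.prems(3) obtain q where q: "q \<in> set cs"
    "(x', b', y) = (a, fst q, lab (snd q)) \<or> (x', b', y) \<in> ledges (snd q)"
    by auto
  have "y \<in> set (labels (snd p))" using p ledges_labels[of x b y "snd p"] by auto
  moreover have "y \<in> set (labels (snd q))" using q ledges_labels[of x' b' y "snd q"] by auto
  ultimately have "p = q" using kids_eq_if_labels_meet[OF LNode.prems(1) p(1) q(1)] by blast
  moreover have dp: "distinct (labels (snd p))" using distinct_labels_kid[OF LNode.prems(1) p(1)] by blast
  ultimately show ?case
    using p(2) q(2) LNode.IH[OF p(1) dp] ledges_not_into_root[OF dp] by fastforce
qed

lemma kid_edge_in_ledges: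
  assumes "s \<in> subtrees t" "p \<in> set (kids s)"
  shows "(lab s, fst p, lab (snd p)) \<in> ledges t"
  unfolding ledges_def mem_Collect_eq by (intro exI conjI, rule refl, (rule assms)+)

lemma ledges_from_subtree:
  assumes "distinct (labels t)" "s \<in> subtrees t"
  shows "{(x, b, y) \<in> ledges t. x = lab s} = (\<lambda>p. (lab s, fst p, lab (snd p))) ` set (kids s)"
proof (intro equalityI subsetI)
  fix e assume "e \<in> {(x, b, y) \<in> ledges t. x = lab s}"
  then obtain s' p where s': "s' \<in> subtrees t" "p \<in> set (kids s')" "lab s' = lab s"
    and e: "e = (lab s', fst p, lab (snd p))"
    unfolding ledges_def by auto
  have "s' = s" using inj_onD[OF inj_on_lab_subtrees[OF assms(1)] s'(3) s'(1) assms(2)] .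
  then have "p \<in> set (kids s)" using s'(2) by simp
  then show "e \<in> (\<lambda>p. (lab s, fst p, lab (snd p))) ` set (kids s)"
    unfolding e \<open>s' = s\<close> by (rule imageI)
next
  fix e assume "e \<in> (\<lambda>p. (lab s, fst p, lab (snd p))) ` set (kids s)"
  then obtain p where p: "p \<in> set (kids s)" "e = (lab s, fst p, lab (snd p))" by blast
  then show "e \<in> {(x, b, y) \<in> ledges t. x = lab s}"
    using kid_edge_in_ledges[OF assms(2) p(1)] by simp
qed

lemma ledges_into_kid:
  assumes "distinct (labels t)" "s \<in> subtrees t" "p \<in> set (kids s)"
  shows "{(x, b, y) \<in> ledges t. y = lab (snd p)} = {(lab s, fst p, lab (snd p))}"
proof -
  have "(lab s, fst p, lab (snd p)) \<in> ledges t" using kid_edge_in_ledges[OF assms(2,3)] .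
  then show ?thesis using ledges_parent_unique[OF assms(1)] by blast
qed

lemma distinct_kid_labels: "distinct (labels (LNode a cs)) \<Longrightarrow> distinct (map (\<lambda>p. lab (snd p)) cs)"
proof (induction cs)
  case (Cons p ps)
  have disj: "set (labels (snd p)) \<inter> set (concat (map (\<lambda>p. labels (snd p)) ps)) = {}"
    using Cons.prems by simp
  have "lab (snd p) \<notin> (\<lambda>p. lab (snd p)) ` set ps"
  proof
    assume "lab (snd p) \<in> (\<lambda>p. lab (snd p)) ` set ps"
    then obtain q where q: "q \<in> set ps" "lab (snd p) = lab (snd q)" by blast
    have "set (labels (snd q)) \<subseteq> set (concat (map (\<lambda>p. labels (snd p)) ps))"
      using q(1) by auto
    then have "lab (snd p) \<in> set (concat (map (\<lambda>p. labels (snd p)) ps))"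
      using q(2) lab_in_labels by (metis subsetD)
    then show False using disj lab_in_labels[of "snd p"] by blast
  qed
  moreover have "distinct (map (\<lambda>p. lab (snd p)) ps)" using Cons.IH Cons.prems by simp
  ultimately show ?case by simp
qed simp

lemma card_ledges_from_subtree:
  assumes "distinct (labels t)" "s \<in> subtrees t"
  shows "card {(x, b, y) \<in> ledges t. x = lab s} = length (kids s)"
proof -
  obtain a cs where s: "s = LNode a cs" by (cases s)
  have "distinct (labels (LNode a cs))" using distinct_labels_subtree[OF assms(2,1)] s by simp
  then have "distinct (map (\<lambda>p. lab (snd p)) cs)" by (rule distinct_kid_labels)
  then have cs: "distinct cs" "inj_on (\<lambda>p. lab (snd p)) (set cs)" by (simp_all add: distinct_map)
  have "inj_on (\<lambda>p. (a, fst p, lab (snd p))) (set cs)"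
    using cs(2) unfolding inj_on_def by auto
  then show ?thesis
    unfolding ledges_from_subtree[OF assms] using s by (simp add: card_image distinct_card[OF cs(1)])
qed

lemma root_reaches_labels:
  "v \<in> set (labels t) \<Longrightarrow> (lab t, v) \<in> {(x, y). \<exists>b. (x, b, y) \<in> ledges t}\<^sup>*"
proof (induction t arbitrary: v rule: ltree_induct)
  case (LNode a cs)
  show ?case
  proof (cases "v = a")
    case False
    then obtain p where p: "p \<in> set cs" "v \<in> set (labels (snd p))" using LNode.prems by auto
    have "(lab (snd p), v) \<in> {(x, y). \<exists>b. (x, b, y) \<in> ledges (snd p)}\<^sup>*" using LNode.IH[OF p] .
    also have "\<dots> \<subseteq> {(x, y). \<exists>b. (x, b, y) \<in> ledges (LNode a cs)}\<^sup>*"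
      by (rule rtrancl_mono) (use p(1) in auto)
    finally show ?thesis
      using p(1) by (auto intro: converse_rtrancl_into_rtrancl)
  qed simp
qed

lemma edge_set_eq_image: "{{x, y} | x b y. (x, b, y) \<in> S} = (\<lambda>(x, b, y). {x, y}) ` S"
  by (auto intro: rev_image_eqI)

lemma lower_end_of_edge:
  fixes t :: "'a :: linorder ltree"
  assumes "\<forall>(x, b, y)\<in>ledges t. x < y" "{x, y} \<in> (\<lambda>(x, b, y). {x, y}) ` ledges t" "x < y"
  shows "\<exists>b. (x, b, y) \<in> ledges t"
proof -
  obtain u b w where "(u, b, w) \<in> ledges t" "{x, y} = {u, w}" using assms(2) by auto
  moreover from calculation have "u < w" using assms(1) by auto
  ultimately show ?thesis using assms(3) by (auto simp: doubleton_eq_iff)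
qed

lemma inj_on_edge_image:
  fixes t :: "'a :: linorder ltree"
  assumes "distinct (labels t)" "\<forall>(x, b, y)\<in>ledges t. x < y"
  shows "inj_on (\<lambda>(x, b, y). {x, y}) (ledges t)"
proof (rule inj_onI)
  fix e e' assume e: "e \<in> ledges t" "e' \<in> ledges t"
    and eq: "(\<lambda>(x, b, y). {x, y}) e = (\<lambda>(x, b, y). {x, y}) e'"
  obtain x b y x' b' y' where ee: "e = (x, b, y)" "e' = (x', b', y')" by (metis prod_cases3)
  have "x < y" "x' < y'" using e ee assms(2) by auto
  then have "x = x' \<and> y = y'" using eq ee by (auto simp: doubleton_eq_iff)
  then show "e = e'" using ledges_parent_unique[OF assms(1), of x b y x' b'] e ee by simp
qed

definition incident_ledges :: "'a ltree \<Rightarrow> 'a \<Rightarrow> ('a \<times> bool \<times> 'a) set" where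
  "incident_ledges t v = {(x, b, y) \<in> ledges t. x = v} \<union> {(x, b, y) \<in> ledges t. y = v}"

lemma incident_ledges_root:
  assumes "distinct (labels t)"
  shows "incident_ledges t (lab t) = {(x, b, y) \<in> ledges t. x = lab t}"
  using ledges_not_into_root[OF assms] unfolding incident_ledges_def by auto

lemma incident_ledges_kid:
  assumes "distinct (labels t)" "s \<in> subtrees t" "p \<in> set (kids s)"
  shows "incident_ledges t (lab (snd p)) =
    insert (lab s, fst p, lab (snd p)) {(x, b, y) \<in> ledges t. x = lab (snd p)}"
  using ledges_into_kid[OF assms] unfolding incident_ledges_def by auto

lemma card_incident_ledges_root:
  assumes "distinct (labels t)"
  shows "card (incident_ledges t (lab t)) = length (kids t)"
  unfolding incident_ledges_root[OF assms] using card_ledges_from_subtree[OF assms subtrees.self] .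

lemma card_incident_ledges_kid:
  assumes "distinct (labels t)" "s \<in> subtrees t" "p \<in> set (kids s)"
  shows "card (incident_ledges t (lab (snd p))) = Suc (length (kids (snd p)))"
proof -
  obtain a cs where s: "s = LNode a cs" by (cases s)
  have "distinct (labels (LNode a cs))" using distinct_labels_subtree[OF assms(2,1)] s by simp
  then have "a \<notin> set (labels (snd p))" using distinct_labels_kid assms(3) s by simp
  then have "(lab s, fst p, lab (snd p)) \<notin> {(x, b, y) \<in> ledges t. x = lab (snd p)}"
    using s lab_in_labels[of "snd p"] by auto
  moreover have "finite {(x, b, y) \<in> ledges t. x = lab (snd p)}"
    by (rule finite_subset[OF _ finite_ledges]) auto
  ultimately show ?thesis
    unfolding incident_ledges_kid[OF assms]
    using card_ledges_from_subtree[OF assms(1) subtrees.kid[OF assms(2,3)]] by simp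
qed

lemma sub_ok_kids:
  "s \<in> subtrees t \<Longrightarrow> ptree_ok t \<Longrightarrow> p \<in> set (kids s) \<Longrightarrow> sub_ok (fst p) (snd p)"
proof (induction arbitrary: p rule: subtrees.induct)
  case self
  then show ?case by (cases t) auto
next
  case (kid s q)
  have "sub_ok (fst q) (snd q)" using kid.IH kid.hyps(2) kid.prems(1) by blast
  then show ?case using kid.prems(2) by (cases "snd q") auto
qed

lemma sub_ok_map_ltree: "sub_ok c (map_ltree f t) = sub_ok c t"
  by (induction t arbitrary: c rule: ltree_induct) (auto simp: map_prod_def split_beta)

lemma ptree_ok_map_ltree: "ptree_ok (map_ltree f t) = ptree_ok t"
  by (cases t) (auto simp: map_prod_def split_beta sub_ok_map_ltree length_Suc_conv)

section \<open>Preorder numbering\<close>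

fun number :: "nat \<Rightarrow> 'a ltree \<Rightarrow> nat ltree"
  and number_kids :: "nat \<Rightarrow> (bool \<times> 'a ltree) list \<Rightarrow> (bool \<times> nat ltree) list" where
  "number n (LNode a cs) = LNode n (number_kids (Suc n) cs)"
| "number_kids n [] = []"
| "number_kids n (p # ps) = (fst p, number n (snd p)) # number_kids (n + length (labels (snd p))) ps"

lemma labels_number:
  "labels (number n (t :: 'a ltree)) = [n..<n + length (labels t)]"
  "concat (map (\<lambda>p. labels (snd p)) (number_kids n (cs :: (bool \<times> 'a ltree) list))) =
     [n..<n + length (concat (map (\<lambda>p. labels (snd p)) cs))]"
proof (induction n t and n cs rule: number_number_kids.induct)
  case (1 n a cs)
  then show ?case by (simp del: upt_Suc add: upt_conv_Cons)
next
  case (3 n p ps)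
  then show ?case by (simp del: upt_Suc add: upt_add_eq_append[symmetric]) (simp add: add.assoc)
qed simp

lemma erase_number:
  "map_ltree (\<lambda>_. ()) (number n (t :: 'a ltree)) = map_ltree (\<lambda>_. ()) t"
  "map (map_prod id (map_ltree (\<lambda>_. ()))) (number_kids n (cs :: (bool \<times> 'a ltree) list)) =
     map (map_prod id (map_ltree (\<lambda>_. ()))) cs"
proof (induction n t and n cs rule: number_number_kids.induct)
  case (3 n p ps)
  then show ?case by (cases p) simp
qed (simp_all add: id_def)

lemma number_increasing:
  "(x, b, y) \<in> ledges (number n (t :: 'a ltree)) \<Longrightarrow> x < y"
  "p \<in> set (number_kids n (cs :: (bool \<times> 'a ltree) list)) \<Longrightarrow> (x, b, y) \<in> ledges (snd p) \<Longrightarrow> x < y"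
proof (induction n t and n cs arbitrary: x b y and p x b y rule: number_number_kids.induct)
  case (1 n a cs)
  have "Suc n \<le> lab (snd p)" if "p \<in> set (number_kids (Suc n) cs)" for p
  proof -
    have "lab (snd p) \<in> set (concat (map (\<lambda>p. labels (snd p)) (number_kids (Suc n) cs)))"
      using that by (auto intro!: bexI[of _ p])
    then show ?thesis unfolding labels_number by (simp del: upt_Suc)
  qed
  then show ?case using 1 by fastforce
qed auto

section \<open>Closed walks as lists of edges\<close>

fun path_edges :: "'a list \<Rightarrow> 'a set list" where
  "path_edges (x # y # zs) = {x, y} # path_edges (y # zs)"
| "path_edges _ = []"

lemma path_edges_Cons: "path_edges (x # xs) = (if xs = [] then [] else {x, hd xs} # path_edges xs)"
  by (cases xs) auto

lemma path_edges_append: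
  "xs \<noteq> [] \<Longrightarrow> path_edges (xs @ ys) = path_edges xs @ path_edges (last xs # ys)"
  by (induction xs rule: path_edges.induct) (auto simp: path_edges_Cons)

lemma length_path_edges: "length (path_edges xs) = length xs - 1"
  by (induction xs rule: path_edges.induct) auto

lemma nth_path_edges: "Suc j < length xs \<Longrightarrow> path_edges xs ! j = {xs ! j, xs ! Suc j}"
  by (induction xs arbitrary: j rule: path_edges.induct) (auto simp: nth_Cons split: nat.splits)

definition first_index :: "'a list \<Rightarrow> 'a \<Rightarrow> nat" where
  "first_index xs x = (LEAST j. j < length xs \<and> xs ! j = x)"

lemma first_index_append_Cons: "x \<notin> set xs \<Longrightarrow> first_index (xs @ x # ys) x = length xs"
  unfolding first_index_def
proof (rule Least_equality)
  fix j assume "x \<notin> set xs" "j < length (xs @ x # ys) \<and> (xs @ x # ys) ! j = x"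
  then show "length xs \<le> j" by (metis leI nth_append nth_mem)
qed simp

lemma wstep_eq_path_edges:
  assumes "W \<noteq> []" "j < length W"
  shows "wstep W j = path_edges (W @ [hd W]) ! j"
proof -
  have "(W @ [hd W]) ! Suc j = W ! (Suc j mod length W)"
  proof (cases "Suc j < length W")
    case False
    then have "Suc j = length W" using assms(2) by simp
    then show ?thesis using assms(1) by (simp add: hd_conv_nth)
  qed (simp add: nth_append)
  then show ?thesis using assms by (simp add: nth_path_edges nth_append wstep_def)
qed

lemma
  assumes "W \<noteq> []"
  shows walk_edges_eq_path_edges: "walk_edges W = set (path_edges (W @ [hd W]))"
    and trav_count_eq_count_list: "trav_count W e = count_list (path_edges (W @ [hd W])) e"
    and first_trav_eq_first_index: "first_trav W e = first_index (path_edges (W @ [hd W])) e"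
proof -
  have len: "length (path_edges (W @ [hd W])) = length W" by (simp add: length_path_edges)
  note step = wstep_eq_path_edges[OF assms]
  show "walk_edges W = set (path_edges (W @ [hd W]))"
    unfolding walk_edges_def set_conv_nth len by (metis step)
  show "trav_count W e = count_list (path_edges (W @ [hd W])) e"
    unfolding trav_count_def count_list_eq_length_filter length_filter_conv_card len
    by (metis step)
  show "first_trav W e = first_index (path_edges (W @ [hd W])) e"
    unfolding first_trav_def first_index_def len by (metis step)
qed

section \<open>The depth-first tour\<close>

text \<open>An excess edge is walked down and up twice, a simple edge once.\<close>

fun tour :: "'a ltree \<Rightarrow> 'a list" where
  "tour (LNode a cs) =
     a # concat (map (\<lambda>p. tour (snd p) @ (if fst p then [a, lab (snd p), a] else [a])) cs)"

lemma tour_nonempty: "tour t \<noteq> []"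
  by (cases t) simp

lemma hd_tour [simp]: "hd (tour t) = lab t"
  by (cases t) simp

lemma last_tour [simp]: "last (tour t) = lab t"
proof (cases t)
  case (LNode a cs)
  then show ?thesis by (induction cs rule: rev_induct) auto
qed

lemma set_tour: "set (tour t) = set (labels t)"
  by (induction t rule: ltree_induct) (auto split: if_splits)

definition kid_block :: "'a \<Rightarrow> bool \<times> 'a ltree \<Rightarrow> 'a set list" where
  "kid_block a p = {a, lab (snd p)} # path_edges (tour (snd p)) @
     (if fst p then [{a, lab (snd p)}, {a, lab (snd p)}, {a, lab (snd p)}] else [{a, lab (snd p)}])"

lemma path_edges_tour: "path_edges (tour (LNode a cs)) = concat (map (kid_block a) cs)"
proof (induction cs)
  case (Cons p ps)
  let ?s = "tour (snd p) @ (if fst p then [a, lab (snd p), a] else [a])"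
  let ?r = "concat (map (\<lambda>p. tour (snd p) @ (if fst p then [a, lab (snd p), a] else [a])) ps)"
  have "path_edges (tour (LNode a (p # ps))) = path_edges ((a # ?s) @ ?r)" by simp
  also have "\<dots> = path_edges (a # ?s) @ path_edges (a # ?r)"
    by (subst path_edges_append) simp_all
  also have "path_edges (a # ?s) = kid_block a p"
    using tour_nonempty[of "snd p"]
    by (simp add: path_edges_Cons path_edges_append kid_block_def insert_commute)
  also have "path_edges (a # ?r) = concat (map (kid_block a) ps)"
    using Cons.IH by simp
  finally show ?case by simp
qed simp

declare tour.simps [simp del]

lemma set_kid_block: "set (kid_block a p) = insert {a, lab (snd p)} (set (path_edges (tour (snd p))))"
  by (auto simp: kid_block_def)

lemma set_path_edges_tour: "set (path_edges (tour t)) = (\<lambda>(x, b, y). {x, y}) ` ledges t"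
  by (induction t rule: ltree_induct) (auto simp: path_edges_tour set_kid_block)

lemma path_edges_tour_subset: "e \<in> set (path_edges (tour t)) \<Longrightarrow> e \<noteq> {} \<and> e \<subseteq> set (labels t)"
  using ledges_labels by (fastforce simp: set_path_edges_tour)

lemma kid_block_subset: "e \<in> set (kid_block a p) \<Longrightarrow> e \<noteq> {} \<and> e \<subseteq> insert a (set (labels (snd p)))"
  using path_edges_tour_subset[of e "snd p"] by (auto simp: set_kid_block)

lemma count_kid_block:
  "count_list (kid_block a p) e =
     (if e = {a, lab (snd p)} then if fst p then 4 else 2 else 0) + count_list (path_edges (tour (snd p))) e"
  by (simp add: kid_block_def)

lemma count_path_edges_tour:
  assumes "distinct (labels t)" "(x, b, y) \<in> ledges t"
  shows "count_list (path_edges (tour t)) {x, y} = (if b then 4 else 2)"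
  using assms
proof (induction t rule: ltree_induct)
  case (LNode a cs)
  from LNode.prems(2) obtain p where p: "p \<in> set cs"
    "(x, b, y) = (a, fst p, lab (snd p)) \<or> (x, b, y) \<in> ledges (snd p)"
    by auto
  obtain xs ys where cs: "cs = xs @ p # ys" using split_list[OF p(1)] by blast
  have dp: "distinct (labels (snd p))" "a \<notin> set (labels (snd p))"
    using distinct_labels_kid[OF LNode.prems(1) p(1)] by auto
  have y: "y \<in> set (labels (snd p))" using p ledges_labels[of x b y "snd p"] by auto
  have "{x, y} \<notin> set (kid_block a q)" if q: "q \<in> set xs \<or> q \<in> set ys" for q
  proof
    assume "{x, y} \<in> set (kid_block a q)"
    then have "y \<in> insert a (set (labels (snd q)))" using kid_block_subset[of "{x, y}" a q] by simp
    moreover have "set (labels (snd q)) \<inter> set (labels (snd p)) = {}"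
      using LNode.prems(1) q unfolding cs by auto
    ultimately show False using y dp(2) by blast
  qed
  then have "count_list (path_edges (tour (LNode a cs))) {x, y} = count_list (kid_block a p) {x, y}"
    unfolding path_edges_tour cs by simp
  also have "\<dots> = (if b then 4 else 2)"
    using p(2)
  proof
    assume direct: "(x, b, y) = (a, fst p, lab (snd p))"
    have "{a, lab (snd p)} \<notin> set (path_edges (tour (snd p)))"
      using path_edges_tour_subset dp(2) by blast
    then show ?thesis using direct by (simp add: count_kid_block)
  next
    assume inner: "(x, b, y) \<in> ledges (snd p)"
    have "{x, y} \<noteq> {a, lab (snd p)}" using ledges_labels[OF inner] dp(2) by auto
    then show ?thesis using LNode.IH[OF p(1) dp(1) inner] by (simp add: count_kid_block)
  qed
  finally show ?case .
qed

lemma path_edges_tour_split: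
  assumes "s \<in> subtrees t" "distinct (labels t)"
  shows "\<exists>P Q. path_edges (tour t) = P @ path_edges (tour s) @ Q \<and> (\<forall>e\<in>set P. \<not> e \<subseteq> set (labels s))"
  using assms
proof (induction rule: subtrees.induct)
  case self
  show ?case by (rule exI[of _ "[]"], rule exI[of _ "[]"]) simp
next
  case (kid s p)
  obtain a cs where s: "s = LNode a cs" by (cases s)
  obtain P Q where PQ: "path_edges (tour t) = P @ path_edges (tour s) @ Q"
    and P: "\<forall>e\<in>set P. \<not> e \<subseteq> set (labels s)"
    using kid.IH kid.prems by blast
  obtain xs ys where cs: "cs = xs @ p # ys" using kid.hyps(2) s split_list by fastforce
  have ds: "distinct (labels (LNode a cs))" using distinct_labels_subtree[OF kid.hyps(1) kid.prems] s by simp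
  have dp: "a \<notin> set (labels (snd p))" using distinct_labels_kid[OF ds] cs by simp
  define P' where "P' = P @ concat (map (kid_block a) xs) @ [{a, lab (snd p)}]"
  define Q' where "Q' = (if fst p then [{a, lab (snd p)}, {a, lab (snd p)}, {a, lab (snd p)}]
    else [{a, lab (snd p)}]) @ concat (map (kid_block a) ys) @ Q"
  have "path_edges (tour t) = P' @ path_edges (tour (snd p)) @ Q'"
    unfolding PQ s path_edges_tour cs P'_def Q'_def by (simp add: kid_block_def)
  moreover have "\<not> e \<subseteq> set (labels (snd p))" if e: "e \<in> set P'" for e
  proof -
    have sub: "set (labels (snd p)) \<subseteq> set (labels s)" using s cs by auto
    consider "e \<in> set P" | q where "q \<in> set xs" "e \<in> set (kid_block a q)" | "e = {a, lab (snd p)}"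
      using e unfolding P'_def by auto
    then show ?thesis
    proof cases
      case 1
      then show ?thesis using P sub by blast
    next
      case (2 q)
      have "set (labels (snd q)) \<inter> set (labels (snd p)) = {}" using ds 2(1) unfolding cs by auto
      then show ?thesis using kid_block_subset[OF 2(2)] dp by blast
    next
      case 3
      then show ?thesis using dp by auto
    qed
  qed
  ultimately show ?case by blast
qed

lemma sorted_first_index_kid_blocks:
  assumes "distinct (labels (LNode a cs))" "\<forall>p\<in>set cs. {a, lab (snd p)} \<notin> set P"
  shows "sorted_wrt (<) (map (\<lambda>p. first_index (P @ concat (map (kid_block a) cs) @ Q) {a, lab (snd p)}) cs)
    \<and> (\<forall>p\<in>set cs. length P \<le> first_index (P @ concat (map (kid_block a) cs) @ Q) {a, lab (snd p)})"
  using assms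
proof (induction cs arbitrary: P)
  case (Cons p ps)
  define P' where "P' = P @ kid_block a p"
  let ?idx = "\<lambda>p. first_index (P' @ concat (map (kid_block a) ps) @ Q) {a, lab (snd p)}"
  have L: "P @ concat (map (kid_block a) (p # ps)) @ Q = P' @ concat (map (kid_block a) ps) @ Q"
    by (simp add: P'_def)
  have "P' @ concat (map (kid_block a) ps) @ Q =
      P @ {a, lab (snd p)} # (tl (kid_block a p) @ concat (map (kid_block a) ps) @ Q)"
    by (simp add: P'_def kid_block_def)
  then have first: "?idx p = length P"
    using Cons.prems(2) by (simp add: first_index_append_Cons)
  have ds: "distinct (labels (LNode a ps))" using Cons.prems(1) by simp
  have disj: "set (labels (snd p)) \<inter> set (concat (map (\<lambda>p. labels (snd p)) ps)) = {}"
    using Cons.prems(1) by simp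
  have "{a, lab (snd q)} \<notin> set P'" if q: "q \<in> set ps" for q
  proof
    assume "{a, lab (snd q)} \<in> set P'"
    moreover have "{a, lab (snd q)} \<notin> set P" using Cons.prems(2) q by simp
    ultimately have "{a, lab (snd q)} \<in> set (kid_block a p)" unfolding P'_def by simp
    then have "lab (snd q) \<in> insert a (set (labels (snd p)))"
      using kid_block_subset[of "{a, lab (snd q)}" a p] by simp
    moreover have "lab (snd q) \<noteq> a" using distinct_labels_kid[OF ds q] by auto
    moreover have "lab (snd q) \<in> set (concat (map (\<lambda>p. labels (snd p)) ps))"
      using q by (auto intro!: bexI[of _ q])
    ultimately show False using disj by blast
  qed
  then have IH: "sorted_wrt (<) (map ?idx ps)" "\<forall>q\<in>set ps. length P' \<le> ?idx q"
    using Cons.IH[OF ds] by blast+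
  have len: "length P < length P'" by (simp add: P'_def kid_block_def)
  have "?idx p < ?idx q" "length P \<le> ?idx q" if "q \<in> set ps" for q
    using IH(2) that first len by fastforce+
  then show ?case unfolding L using first IH(1) by auto
qed simp

text \<open>The tour ends back at the root; the closed walk omits this last vertex.\<close>

lemma butlast_tour:
  assumes "kids t \<noteq> []"
  shows "butlast (tour t) \<noteq> []" and "butlast (tour t) @ [hd (butlast (tour t))] = tour t"
    and "hd (butlast (tour t)) = lab t"
proof -
  obtain a p ps where t: "t = LNode a (p # ps)"
    using assms by (metis ltree.collapse neq_Nil_conv)
  have len: "2 \<le> length (tour t)"
    using tour_nonempty[of "snd p"] unfolding t by (cases "tour (snd p)") (simp_all add: tour.simps)
  then show ne: "butlast (tour t) \<noteq> []" by (cases "tour t" rule: rev_cases) auto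
  have "hd (butlast (tour t)) = butlast (tour t) ! 0" using ne by (rule hd_conv_nth)
  also have "\<dots> = tour t ! 0" using len by (simp add: nth_butlast)
  also have "\<dots> = lab t" using hd_conv_nth[OF tour_nonempty, of t] by simp
  finally show hd: "hd (butlast (tour t)) = lab t" .
  show "butlast (tour t) @ [hd (butlast (tour t))] = tour t"
    unfolding hd using append_butlast_last_id[OF tour_nonempty] by simp
qed

lemma realizes_tour:
  assumes dist: "distinct (labels t)" and "kids t \<noteq> []"
  shows "realizes (butlast (tour t)) t"
proof -
  define W where "W = butlast (tour t)"
  note W = butlast_tour[OF assms(2), folded W_def]
  note walk = walk_edges_eq_path_edges[OF W(1)] trav_count_eq_count_list[OF W(1)]
    first_trav_eq_first_index[OF W(1)]
  have edges: "walk_edges W = (\<lambda>(x, b, y). {x, y}) ` ledges t"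
    unfolding walk W(2) set_path_edges_tour ..
  show ?thesis
    unfolding realizes_def W_def[symmetric]
  proof (intro conjI)
    show "lab t = hd W" using W(3) by simp
    show "set (labels t) = set W"
      using arg_cong[OF W(2), of set] hd_in_set[OF W(1)] by (simp add: set_tour insert_absorb)
    show "{{x, y} |x b y. (x, b, y) \<in> ledges t} = walk_edges W"
      unfolding edges edge_set_eq_image ..
    show "\<forall>(x, b, y)\<in>ledges t. b = excess_edge W {x, y}"
    proof clarify
      fix x b y assume e: "(x, b, y) \<in> ledges t"
      have "{x, y} \<in> walk_edges W" using e unfolding edges by force
      then show "b = excess_edge W {x, y}"
        using count_path_edges_tour[OF dist e]
        by (simp add: excess_edge_def trav_count_eq_count_list[OF W(1)] W(2))
    qed
    show "\<forall>s\<in>subtrees t. sorted_wrt (<) (map (\<lambda>p. first_trav W {lab s, lab (snd p)}) (kids s))"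
    proof
      fix s assume s: "s \<in> subtrees t"
      obtain a cs where s': "s = LNode a cs" by (cases s)
      obtain P Q where PQ: "path_edges (tour t) = P @ path_edges (tour s) @ Q"
        and P: "\<forall>e\<in>set P. \<not> e \<subseteq> set (labels s)"
        using path_edges_tour_split[OF s dist] by blast
      have "\<forall>q\<in>set cs. {a, lab (snd q)} \<notin> set P"
        using P s' by fastforce
      then show "sorted_wrt (<) (map (\<lambda>p. first_trav W {lab s, lab (snd p)}) (kids s))"
        using sorted_first_index_kid_blocks[of a cs P Q] distinct_labels_subtree[OF s dist]
        unfolding walk W(2) PQ s' by (simp add: path_edges_tour)
    qed
  qed (rule dist)
qed

section \<open>Walks realizing a tree\<close>

lemma realizes_walk_edges:
  "realizes W t \<Longrightarrow> walk_edges W = (\<lambda>(x, b, y). {x, y}) ` ledges t"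
  unfolding realizes_def edge_set_eq_image by simp

lemma realizes_incident_walk_edges:
  "realizes W t \<Longrightarrow> {e \<in> walk_edges W. v \<in> e} = (\<lambda>(x, b, y). {x, y}) ` incident_ledges t v"
  unfolding realizes_walk_edges incident_ledges_def by auto

lemma realizes_excess_edge:
  assumes "realizes W t" "(x, b, y) \<in> ledges t"
  shows "excess_edge W {x, y} = b" and "simple_edge W {x, y} = (\<not> b)"
proof -
  have "{x, y} \<in> walk_edges W" using assms unfolding realizes_walk_edges[OF assms(1)] by force
  moreover have "excess_edge W {x, y} = b" using assms unfolding realizes_def by auto
  ultimately show "excess_edge W {x, y} = b" "simple_edge W {x, y} = (\<not> b)"
    by (auto simp: simple_edge_def excess_edge_def)
qed

lemma realizes_tdeg:
  assumes r: "realizes W t" and incr: "\<forall>(x, b, y)\<in>ledges t. x < y"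
  shows "tdeg (walk_edges W) v = card (incident_ledges t v)"
proof -
  have "distinct (labels t)" using r by (simp add: realizes_def)
  then have "inj_on (\<lambda>(x, b, y). {x, y}) (incident_ledges t v)"
    by (rule inj_on_subset[OF inj_on_edge_image[OF _ incr]]) (auto simp: incident_ledges_def)
  then show ?thesis
    unfolding tdeg_def realizes_incident_walk_edges[OF r] by (rule card_image)
qed

lemma no_cycle_if_unique_lower_neighbour:
  fixes E :: "'a :: linorder set set"
  assumes uniq: "\<And>x x' y. {x, y} \<in> E \<Longrightarrow> {x', y} \<in> E \<Longrightarrow> x < y \<Longrightarrow> x' < y \<Longrightarrow> x = x'"
  shows "\<not> (\<exists>cs. 3 \<le> length cs \<and> distinct cs \<and> (\<forall>i < length cs. {cs ! i, cs ! (Suc i mod length cs)} \<in> E))"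
proof
  assume "\<exists>cs. 3 \<le> length cs \<and> distinct cs \<and> (\<forall>i < length cs. {cs ! i, cs ! (Suc i mod length cs)} \<in> E)"
  then obtain cs where len: "3 \<le> length cs" and dist: "distinct cs"
    and cyc: "\<forall>i < length cs. {cs ! i, cs ! (Suc i mod length cs)} \<in> E"
    by blast
  define n where "n = length cs"
  have "Max (set cs) \<in> set cs" using len by (intro Max_in) auto
  then obtain i where i: "i < n" "cs ! i = Max (set cs)" unfolding n_def by (metis in_set_conv_nth)
  define j0 where "j0 = (if i = 0 then n - 1 else i - 1)"
  define j1 where "j1 = (if Suc i = n then 0 else Suc i)"
  have j0: "j0 < n" "Suc j0 mod n = i" "j0 \<noteq> i" and j1: "j1 < n" "Suc i mod n = j1" "j1 \<noteq> i"
    and "j0 \<noteq> j1"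
    using i len unfolding j0_def j1_def n_def by auto
  have "{cs ! j0, cs ! i} \<in> E" "{cs ! j1, cs ! i} \<in> E"
    using cyc j0 j1 i(1) unfolding n_def by (metis, metis insert_commute)
  moreover have "cs ! j0 < cs ! i" "cs ! j1 < cs ! i"
    using i j0 j1 dist unfolding n_def
    by (metis List.finite_set Max_ge nth_eq_iff_index_eq nth_mem order_le_neq_trans)+
  ultimately have "cs ! j0 = cs ! j1" by (rule uniq)
  then show False using dist j0(1) j1(1) \<open>j0 \<noteq> j1\<close> unfolding n_def by (simp add: nth_eq_iff_index_eq)
qed

lemma is_tree_if_realizes:
  assumes r: "realizes W t" and incr: "\<forall>(x, b, y)\<in>ledges t. x < y"
  shows "is_tree (set W) (walk_edges W)"
proof -
  have dist: "distinct (labels t)" and V: "set W = set (labels t)"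
    using r unfolding realizes_def by auto
  note E = realizes_walk_edges[OF r]
  define R where "R = {(x, y). {x, y} \<in> walk_edges W}"
  have "(lab t, v) \<in> R\<^sup>*" if "v \<in> set W" for v
  proof -
    have "{(x, y). \<exists>b. (x, b, y) \<in> ledges t} \<subseteq> R" unfolding R_def E by force
    then show ?thesis using root_reaches_labels[of v t] that V rtrancl_mono by blast
  qed
  moreover have "R\<inverse> = R" unfolding R_def by (auto simp: insert_commute)
  ultimately have conn: "(u, v) \<in> R\<^sup>*" if "u \<in> set W" "v \<in> set W" for u v
    using that by (metis rtrancl_converseI rtrancl_trans)
  show ?thesis
    unfolding is_tree_def
  proof (intro conjI)
    show "set W \<noteq> {}" using V lab_in_labels by (metis empty_iff)
    show "\<forall>e\<in>walk_edges W. \<exists>u v. e = {u, v} \<and> u \<noteq> v \<and> u \<in> set W \<and> v \<in> set W"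
      using incr ledges_labels V unfolding E by fastforce
    show "\<forall>u\<in>set W. \<forall>v\<in>set W. (u, v) \<in> {(x, y). {x, y} \<in> walk_edges W}\<^sup>*"
      using conn unfolding R_def by blast
    show "\<not> (\<exists>cs. 3 \<le> length cs \<and> distinct cs \<and>
        (\<forall>i<length cs. {cs ! i, cs ! (Suc i mod length cs)} \<in> walk_edges W))"
    proof (rule no_cycle_if_unique_lower_neighbour)
      fix x x' y assume "{x, y} \<in> walk_edges W" "{x', y} \<in> walk_edges W" "x < y" "x' < y"
      then show "x = x'"
        using lower_end_of_edge[OF incr] ledges_parent_unique[OF dist] unfolding E by metis
    qed
  qed simp
qed

lemma realizes_nonroot_vertex:
  assumes "realizes W t" "v \<in> set W" "v \<noteq> hd W"
  obtains s p where "s \<in> subtrees t" "p \<in> set (kids s)" "v = lab (snd p)"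
proof -
  have "v \<in> lab ` subtrees t"
    using assms(1,2) unfolding realizes_def set_labels_eq_lab_subtrees by simp
  then obtain s where s: "s \<in> subtrees t" "v = lab s" by blast
  then have "s \<noteq> t" using assms(1,3) unfolding realizes_def by auto
  then obtain s' p where "s' \<in> subtrees t" "p \<in> set (kids s')" "s = snd p"
    using subtree_is_kid[OF s(1)] by blast
  then show ?thesis using s(2) by (intro that) simp_all
qed

context
  fixes W :: "nat list" and t :: "nat ltree"
  assumes r: "realizes W t" and ok: "ptree_ok t" and incr: "\<forall>(x, b, y)\<in>ledges t. x < y"
begin

lemma realizes_root_leaf_excess:
  assumes "tdeg (walk_edges W) (lab t) = 1" "e \<in> walk_edges W" "lab t \<in> e"
  shows "excess_edge W e"
proof -
  have dist: "distinct (labels t)" using r unfolding realizes_def by simp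
  have "length (kids t) = 1"
    using assms(1) realizes_tdeg[OF r incr] card_incident_ledges_root[OF dist] by simp
  then obtain q where q: "kids t = [q]" by (auto simp: length_Suc_conv)
  then have "fst q" using ok by (cases t) simp
  have "incident_ledges t (lab t) = {(lab t, fst q, lab (snd q))}"
    using incident_ledges_root[OF dist] ledges_from_subtree[OF dist subtrees.self] q by simp
  then have "{e \<in> walk_edges W. lab t \<in> e} = {{lab t, lab (snd q)}}"
    unfolding realizes_incident_walk_edges[OF r] by simp
  then have "e = {lab t, lab (snd q)}" using assms(2,3) by blast
  then show ?thesis
    using realizes_excess_edge(1)[OF r kid_edge_in_ledges[OF subtrees.self, of q]] q \<open>fst q\<close> by simp
qed

lemma realizes_leaf_not_simple:
  assumes "s \<in> subtrees t" "p \<in> set (kids s)" "tdeg (walk_edges W) (lab (snd p)) = 1"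
  shows "\<not> (\<exists>e\<in>walk_edges W. lab (snd p) \<in> e \<and> simple_edge W e)"
proof -
  have dist: "distinct (labels t)" using r unfolding realizes_def by simp
  have leaf: "kids (snd p) = []"
    using assms(3) realizes_tdeg[OF r incr] card_incident_ledges_kid[OF dist assms(1,2)] by simp
  then have "fst p" using sub_ok_kids[OF assms(1) ok assms(2)] by (cases "snd p") simp
  have "incident_ledges t (lab (snd p)) = {(lab s, fst p, lab (snd p))}"
    using incident_ledges_kid[OF dist assms(1,2)]
      ledges_from_subtree[OF dist subtrees.kid[OF assms(1,2)]] leaf by simp
  then have edges: "{e \<in> walk_edges W. lab (snd p) \<in> e} = {{lab s, lab (snd p)}}"
    unfolding realizes_incident_walk_edges[OF r] by simp
  have "\<not> simple_edge W {lab s, lab (snd p)}"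
    using realizes_excess_edge(2)[OF r kid_edge_in_ledges[OF assms(1,2)]] \<open>fst p\<close> by simp
  then show ?thesis
  proof (intro notI)
    assume "\<exists>e\<in>walk_edges W. lab (snd p) \<in> e \<and> simple_edge W e"
    then obtain e where "e \<in> {e \<in> walk_edges W. lab (snd p) \<in> e}" "simple_edge W e" by blast
    then show False using edges \<open>\<not> simple_edge W {lab s, lab (snd p)}\<close> by simp
  qed
qed

lemma realizes_degree_two_not_all_simple:
  assumes "s \<in> subtrees t" "p \<in> set (kids s)" "tdeg (walk_edges W) (lab (snd p)) = 2"
  shows "\<not> (\<forall>e\<in>walk_edges W. lab (snd p) \<in> e \<longrightarrow> simple_edge W e)"
proof -
  have dist: "distinct (labels t)" using r unfolding realizes_def by simp
  have "length (kids (snd p)) = 1"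
    using assms(3) realizes_tdeg[OF r incr] card_incident_ledges_kid[OF dist assms(1,2)] by simp
  then obtain q where q: "kids (snd p) = [q]" by (auto simp: length_Suc_conv)
  then have "fst p \<or> fst q" using sub_ok_kids[OF assms(1) ok assms(2)] by (cases "snd p") simp
  have "incident_ledges t (lab (snd p)) = {(lab s, fst p, lab (snd p)), (lab (snd p), fst q, lab (snd q))}"
    using incident_ledges_kid[OF dist assms(1,2)]
      ledges_from_subtree[OF dist subtrees.kid[OF assms(1,2)]] q by simp
  then have edges: "{e \<in> walk_edges W. lab (snd p) \<in> e} = {{lab s, lab (snd p)}, {lab (snd p), lab (snd q)}}"
    unfolding realizes_incident_walk_edges[OF r] by simp
  have "simple_edge W {lab s, lab (snd p)} = (\<not> fst p)"
    using realizes_excess_edge(2)[OF r kid_edge_in_ledges[OF assms(1,2)]] by simp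
  moreover have "simple_edge W {lab (snd p), lab (snd q)} = (\<not> fst q)"
    using realizes_excess_edge(2)[OF r kid_edge_in_ledges[OF subtrees.kid[OF assms(1,2)], of q]] q
    by simp
  moreover have "{lab s, lab (snd p)} \<in> {e \<in> walk_edges W. lab (snd p) \<in> e}"
    and "{lab (snd p), lab (snd q)} \<in> {e \<in> walk_edges W. lab (snd p) \<in> e}"
    unfolding edges by simp_all
  ultimately show ?thesis using \<open>fst p \<or> fst q\<close> by auto
qed

lemma kernel_walk_if_realizes: "tree_walk m W \<Longrightarrow> kernel_walk m W"
  unfolding kernel_walk_def
proof (intro conjI ballI impI)
  fix v assume v: "v \<in> set W" "v \<noteq> hd W \<and> wleaf W v"
  obtain s p where sp: "s \<in> subtrees t" "p \<in> set (kids s)" "v = lab (snd p)"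
    using realizes_nonroot_vertex[OF r v(1)] v(2) by blast
  then show "\<not> (\<exists>e\<in>walk_edges W. v \<in> e \<and> simple_edge W e)"
    using realizes_leaf_not_simple[OF sp(1,2)] v(2) unfolding wleaf_def by simp
next
  have root: "hd W = lab t" using r unfolding realizes_def by simp
  fix e assume "wleaf W (hd W)" "e \<in> walk_edges W" "hd W \<in> e"
  then show "excess_edge W e"
    using realizes_root_leaf_excess[of e] unfolding wleaf_def root by simp
next
  fix v assume v: "v \<in> set W" "v \<noteq> hd W \<and> tdeg (walk_edges W) v = 2"
  obtain s p where sp: "s \<in> subtrees t" "p \<in> set (kids s)" "v = lab (snd p)"
    using realizes_nonroot_vertex[OF r v(1)] v(2) by blast
  then show "\<not> (\<forall>e\<in>walk_edges W. v \<in> e \<longrightarrow> simple_edge W e)"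
    using realizes_degree_two_not_all_simple[OF sp(1,2)] v(2) by simp
qed

end

lemma kernel_walk_realization:
  fixes t :: ptree
  assumes ok: "ptree_ok t"
  shows "\<exists>m W lt. kernel_walk m W \<and> realizes W lt \<and> erase lt = t"
proof -
  define m where "m = length (labels t)"
  define lt where "lt = number 1 t"
  define W where "W = butlast (tour lt)"
  have labels: "labels lt = [1..<Suc m]" unfolding lt_def m_def using labels_number(1)[of 1 t] by simp
  have "(\<lambda>_ :: unit. ()) = id" by (rule ext) simp
  then have erase: "erase lt = t"
    unfolding erase_def lt_def erase_number(1) by (simp add: ltree.map_id)
  then have "ptree_ok lt" using ok ptree_ok_map_ltree unfolding erase_def by metis
  then have "kids lt \<noteq> []" by (cases lt) auto
  have dist: "distinct (labels lt)" using labels by simp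
  have r: "realizes W lt" unfolding W_def using realizes_tour[OF dist \<open>kids lt \<noteq> []\<close>] .
  have incr: "\<forall>(x, b, y)\<in>ledges lt. x < y" unfolding lt_def using number_increasing(1) by blast
  have "set W = {1..m}" using r labels unfolding realizes_def by auto
  moreover have "W \<noteq> []" using \<open>set W = {1..m}\<close> labels lab_in_labels[of lt] by auto
  moreover have "is_tree (set W) (walk_edges W)" by (rule is_tree_if_realizes[OF r incr])
  ultimately have "tree_walk m W" by (simp add: tree_walk_def)
  then have "kernel_walk m W" by (rule kernel_walk_if_realizes[OF r \<open>ptree_ok lt\<close> incr])
  then show ?thesis using r erase by blast
qed

theorem lemma1:
  shows "(\<forall>m W. kernel_walk m W \<longrightarrow>
            (\<forall>v\<in>set W. wleaf W v \<longrightarrow>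
               (\<exists>e\<in>walk_edges W. v \<in> e \<and> excess_edge W e)) \<and>
            (\<forall>v\<in>set W. \<not> wleaf W v \<longrightarrow>
               2 \<le> woutdeg W v \<or> (\<exists>e\<in>walk_edges W. v \<in> e \<and> excess_edge W e)))
       \<and> (\<forall>t :: ptree. ptree_ok t \<longrightarrow>
            (\<exists>m W lt. kernel_walk m W \<and> realizes W lt \<and> erase lt = t))"
proof (intro conjI allI impI ballI)
  fix m W v assume "kernel_walk m W" "v \<in> set W" "wleaf W v"
  then show "\<exists>e\<in>walk_edges W. v \<in> e \<and> excess_edge W e" by (rule kernel_walk_leaf_excess)
next
  fix m W v assume "kernel_walk m W" "v \<in> set W" "\<not> wleaf W v"
  then show "2 \<le> woutdeg W v \<or> (\<exists>e\<in>walk_edges W. v \<in> e \<and> excess_edge W e)"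
    by (rule kernel_walk_inner_vertex)
next
  fix t :: ptree assume "ptree_ok t"
  then show "\<exists>m W lt. kernel_walk m W \<and> realizes W lt \<and> erase lt = t"
    by (rule kernel_walk_realization)
qed

end
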